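(* If the graph $G=([k],E)$ is realisable in $\mathbb{R}^d$ with profile $\boldsymbol\lambda$ and $\lambda_i\ge 2$ for every $i\in[k]$, then $\zeta(G,\boldsymbol\lambda)\le\frac58 d+\frac18 k$.
   Context: A sphere of dimension $\ell$ in $\mathbb{R}^d$ ($0\le\ell\le d-1$) is the set of points of an $(\ell+1)$-dimensional affine subspace at a fixed positive distance from a fixed point of that subspace. For finite sets $P_1,\dots,P_k\subset\mathbb{R}^d$, the profile of $(P_1,\dots,P_k)$ is $\boldsymbol\lambda=(\lambda_1,\dots,\lambda_k)$, where $\lambda_i=0$ if $|P_i|\le 3$, and otherwise $\lambda_i$ is the smallest $\ell$ such that some sphere of dimension $\ell$ contains $P_i$, with $\lambda_i=d$ if no sphere contains $P_i$. A graph $G=([k],E)$ is compatible with $(P_1,\dots,P_k)$ if $\|p-p'\|=1$ for every edge $\{i,j\}\in E$ and all $p\in P_i$, $p'\in P_j$. $G$ is realisable in $\mathbb{R}^d$ with profile $\boldsymbol\lambda$ if there exist finite sets $P_1,\dots,P_k\subset\mathbb{R}^d$ with profile $\boldsymbol\lambda$ that are compatible with $G$. For $i\in[k]$ let $V_i=\{j\in[k]\setminus\{i\}:\{i,j\}\notin E\}$. $\zeta(G,\boldsymbol\lambda)$ denotes the optimum value of the linear program: minimize $\sum_{i\in[k]}\lambda_ix_i$ over $\mathbf{x}\in\mathbb{R}^k$ subject to $x_i\ge 0$ and $\lambda_ix_i+\sum_{j\in V_i}x_j\ge 1$ for all $i\in[k]$. *)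

theory Defs
  imports "HOL-Analysis.Analysis"
begin

definition is_sphere :: "nat \<Rightarrow> 'a::euclidean_space set \<Rightarrow> bool" where
  "is_sphere l S \<longleftrightarrow> (\<exists>A c r. affine A \<and> aff_dim A = int l + 1 \<and> c \<in> A \<and> r > 0 \<and>
      S = {x \<in> A. dist x c = r})"

definition profile_entry :: "'a::euclidean_space set \<Rightarrow> nat" where
  "profile_entry P =
     (if card P \<le> 3 then 0
      else if (\<exists>l S. is_sphere l S \<and> P \<subseteq> (S :: 'a set))
           then (LEAST l. \<exists>S. is_sphere l S \<and> P \<subseteq> (S :: 'a set))
      else DIM('a))"

definition is_graph_on :: "nat \<Rightarrow> nat set set \<Rightarrow> bool" where
  "is_graph_on k E \<longleftrightarrow> (\<forall>e\<in>E. \<exists>i j. i \<in> {1..k} \<and> j \<in> {1..k} \<and> i \<noteq> j \<and> e = {i, j})"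

definition compatible :: "nat \<Rightarrow> nat set set \<Rightarrow> (nat \<Rightarrow> 'a::euclidean_space set) \<Rightarrow> bool" where
  "compatible k E P \<longleftrightarrow>
     (\<forall>i\<in>{1..k}. \<forall>j\<in>{1..k}. {i, j} \<in> E \<longrightarrow> (\<forall>p\<in>P i. \<forall>p'\<in>P j. dist p p' = 1))"

definition realisable :: "'a::euclidean_space itself \<Rightarrow> nat \<Rightarrow> nat set set \<Rightarrow> (nat \<Rightarrow> nat) \<Rightarrow> bool" where
  "realisable _ k E lam \<longleftrightarrow>
     (\<exists>P :: nat \<Rightarrow> 'a set. (\<forall>i\<in>{1..k}. finite (P i) \<and> profile_entry (P i) = lam i)
        \<and> compatible k E P)"

definition nonnbrs :: "nat \<Rightarrow> nat set set \<Rightarrow> nat \<Rightarrow> nat set" where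
  "nonnbrs k E i = {j \<in> {1..k}. j \<noteq> i \<and> {i, j} \<notin> E}"

definition lp_feasible :: "nat \<Rightarrow> nat set set \<Rightarrow> (nat \<Rightarrow> nat) \<Rightarrow> (nat \<Rightarrow> real) \<Rightarrow> bool" where
  "lp_feasible k E lam x \<longleftrightarrow>
     (\<forall>i\<in>{1..k}. x i \<ge> 0 \<and> real (lam i) * x i + (\<Sum>j\<in>nonnbrs k E i. x j) \<ge> 1)"

definition zeta :: "nat \<Rightarrow> nat set set \<Rightarrow> (nat \<Rightarrow> nat) \<Rightarrow> real" where
  "zeta k E lam = Inf {\<Sum>i\<in>{1..k}. real (lam i) * x i | x. lp_feasible k E lam x}"

end

theory Submission
  imports Defs
begin

text \<open>By LP duality it suffices to show that every w \<ge> 0 with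
  lam j * w j + (\<Sum>i\<in>V j. w i) \<le> lam j for all j has total weight at most 5d/8 + k/8.
  For a clique C of size at least two, choose a_i \<in> P_i: unit distances make the translates
  P_i - a_i pairwise orthogonal, and each P_i is equidistant from a point of another P_j, hence lies
  on a sphere of dimension aff_dim P_i - 1. So lam i + 1 \<le> aff_dim P_i and
  \<Sum>i\<in>C. lam i + 1 \<le> d + 1 for every nonempty clique. The dual bound then follows by removing
  a vertex of maximal weight together with its non-neighbours and inducting on its neighbourhood,
  whose cliques have budget reduced by lam v + 1.\<close>

section \<open>Farkas' lemma\<close>

definition inner_on :: "'i set \<Rightarrow> ('i \<Rightarrow> real) \<Rightarrow> ('i \<Rightarrow> real) \<Rightarrow> real" where
  "inner_on I y v = (\<Sum>i\<in>I. y i * v i)"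

lemma inner_on_lincomb_left:
  "inner_on I (\<lambda>i. s * u i + t * v i) w = s * inner_on I u w + t * inner_on I v w"
  by (simp add: inner_on_def sum.distrib sum_distrib_left algebra_simps)

lemma inner_on_lincomb_right:
  "inner_on I w (\<lambda>i. s * u i + t * v i) = s * inner_on I w u + t * inner_on I w v"
  by (simp add: inner_on_def sum.distrib sum_distrib_left algebra_simps)

lemma farkas_cone_lift:
  fixes g :: "'j \<Rightarrow> 'i \<Rightarrow> real"
  assumes "finite J" "a \<notin> J"
    and \<alpha>: "\<alpha> = inner_on I y (g a)" "\<alpha> < 0"
    and y: "\<forall>j\<in>J. 0 \<le> inner_on I y (g j)" "inner_on I y b < 0"
    and c: "\<forall>j\<in>J. 0 \<le> c j"
    and proj: "\<forall>i\<in>I. \<alpha> * b i - inner_on I y b * g a i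
                    = (\<Sum>j\<in>J. c j * (\<alpha> * g j i - inner_on I y (g j) * g a i))"
  shows "\<exists>c'. (\<forall>j\<in>insert a J. 0 \<le> c' j) \<and> (\<forall>i\<in>I. b i = (\<Sum>j\<in>insert a J. c' j * g j i))"
proof -
  define ca where "ca = (inner_on I y b - (\<Sum>j\<in>J. c j * inner_on I y (g j))) / \<alpha>"
  have "0 \<le> (\<Sum>j\<in>J. c j * inner_on I y (g j))"
    using c y(1) by (intro sum_nonneg) auto
  then have "0 \<le> ca"
    using y(2) \<alpha>(2) by (simp add: ca_def divide_nonpos_neg)
  moreover have "b i = (\<Sum>j\<in>insert a J. (c(a := ca)) j * g j i)" if "i \<in> I" for i
  proof -
    have ca_eq: "inner_on I y b - (\<Sum>j\<in>J. c j * inner_on I y (g j)) = \<alpha> * ca"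
      using \<alpha>(2) by (simp add: ca_def)
    have "\<alpha> * b i = \<alpha> * (\<Sum>j\<in>J. c j * g j i)
        + (inner_on I y b - (\<Sum>j\<in>J. c j * inner_on I y (g j))) * g a i"
      using proj that by (simp add: algebra_simps sum_subtractf sum_distrib_left sum_distrib_right)
    then have "\<alpha> * b i = \<alpha> * ((\<Sum>j\<in>J. c j * g j i) + ca * g a i)"
      unfolding ca_eq by (simp add: algebra_simps)
    moreover have "(\<Sum>j\<in>J. (c(a := ca)) j * g j i) = (\<Sum>j\<in>J. c j * g j i)"
      using assms(2) by (intro sum.cong) auto
    ultimately show ?thesis
      using assms(1,2) \<alpha>(2) by simp
  qed
  ultimately show ?thesis
    using c by (intro exI[of _ "c(a := ca)"]) auto
qed

lemma inner_on_projection_adjoint: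
  "inner_on I (\<lambda>i. \<alpha> * y' i - inner_on I y' w * y i) v
     = inner_on I y' (\<lambda>i. \<alpha> * v i - inner_on I y v * w i)"
  using inner_on_lincomb_left[of I \<alpha> y' "- inner_on I y' w" y v]
    inner_on_lincomb_right[of I y' \<alpha> v "- inner_on I y v" w]
  by (simp add: algebra_simps)

lemma farkas_separator_lift:
  fixes g :: "'j \<Rightarrow> 'i \<Rightarrow> real"
  assumes \<alpha>: "\<alpha> = inner_on I y (g a)"
    and y': "\<forall>j\<in>J. 0 \<le> inner_on I y' (\<lambda>i. \<alpha> * g j i - inner_on I y (g j) * g a i)"
      "inner_on I y' (\<lambda>i. \<alpha> * b i - inner_on I y b * g a i) < 0"
  shows "\<exists>z. (\<forall>j\<in>insert a J. 0 \<le> inner_on I z (g j)) \<and> inner_on I z b < 0"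
proof -
  define z where "z = (\<lambda>i. \<alpha> * y' i - inner_on I y' (g a) * y i)"
  have z: "inner_on I z v = inner_on I y' (\<lambda>i. \<alpha> * v i - inner_on I y v * g a i)" for v
    unfolding z_def by (rule inner_on_projection_adjoint)
  have "inner_on I z (g a) = 0"
    unfolding z \<alpha> by (simp add: inner_on_def)
  then show ?thesis
    using y' by (intro exI[of _ z]) (auto simp: z)
qed

lemma farkas_lemma:
  fixes g :: "'j \<Rightarrow> 'i \<Rightarrow> real" and b :: "'i \<Rightarrow> real"
  assumes "finite I" "finite J"
  shows "(\<exists>c. (\<forall>j\<in>J. 0 \<le> c j) \<and> (\<forall>i\<in>I. b i = (\<Sum>j\<in>J. c j * g j i)))
       \<or> (\<exists>y. (\<forall>j\<in>J. 0 \<le> inner_on I y (g j)) \<and> inner_on I y b < 0)"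
  using assms(2)
proof (induction J arbitrary: g b rule: finite_induct)
  case empty
  show ?case
  proof (cases "\<forall>i\<in>I. b i = 0")
    case False
    then obtain i where "i \<in> I" "b i \<noteq> 0" by blast
    then have "0 < (\<Sum>i\<in>I. b i * b i)"
      using assms(1) by (intro sum_pos2) (auto simp: zero_less_mult_iff)
    then have "inner_on I (\<lambda>i. - b i) b < 0"
      by (simp add: inner_on_def sum_negf)
    then show ?thesis by blast
  qed simp
next
  case (insert a J)
  show ?case
  proof (cases "\<exists>c. (\<forall>j\<in>J. 0 \<le> c j) \<and> (\<forall>i\<in>I. b i = (\<Sum>j\<in>J. c j * g j i))")
    case True
    then obtain c where "\<forall>j\<in>J. 0 \<le> c j" "\<forall>i\<in>I. b i = (\<Sum>j\<in>J. c j * g j i)" by blast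
    then have "\<forall>j\<in>insert a J. 0 \<le> (c(a := 0)) j"
      "\<forall>i\<in>I. b i = (\<Sum>j\<in>insert a J. (c(a := 0)) j * g j i)"
      using insert.hyps by (auto intro!: sum.cong)
    then show ?thesis by blast
  next
    case False
    with insert.IH obtain y where y: "\<forall>j\<in>J. 0 \<le> inner_on I y (g j)" "inner_on I y b < 0"
      by blast
    define \<alpha> where "\<alpha> = inner_on I y (g a)"
    show ?thesis
    proof (cases "0 \<le> \<alpha>")
      case True
      with y show ?thesis by (auto simp: \<alpha>_def)
    next
      case False
      text \<open>Fourier-Motzkin step: p annihilates g a and maps into the hyperplane orthogonal to y.\<close>
      define p where "p v = (\<lambda>i. \<alpha> * v i - inner_on I y v * g a i)" for v
      from insert.IH[where g = "\<lambda>j. p (g j)" and b = "p b"] show ?thesis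
      proof
        assume "\<exists>c. (\<forall>j\<in>J. 0 \<le> c j) \<and> (\<forall>i\<in>I. p b i = (\<Sum>j\<in>J. c j * p (g j) i))"
        then show ?thesis
          using farkas_cone_lift[OF insert.hyps \<alpha>_def _ y] False by (auto simp: p_def)
      next
        assume "\<exists>y'. (\<forall>j\<in>J. 0 \<le> inner_on I y' (p (g j))) \<and> inner_on I y' (p b) < 0"
        then show ?thesis
          using farkas_separator_lift[where \<alpha> = \<alpha> and y = y and a = a] \<alpha>_def
          by (auto simp: p_def)
      qed
    qed
  qed
qed

section \<open>LP duality\<close>

lemma lp_dual_certificate_absurd:
  fixes A :: "'r \<Rightarrow> 'c \<Rightarrow> real"
  assumes cost: "\<forall>c\<in>C. 0 \<le> cost c"
    and dual: "\<And>u. \<forall>r\<in>R. 0 \<le> u r \<Longrightarrow> \<forall>c\<in>C. (\<Sum>r\<in>R. u r * A r c) \<le> cost c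
                  \<Longrightarrow> (\<Sum>r\<in>R. u r * rhs r) \<le> B"
    and u: "\<forall>r\<in>R. 0 \<le> u r" "\<forall>c\<in>C. (\<Sum>r\<in>R. u r * A r c) \<le> \<mu> * cost c"
    and \<mu>: "0 \<le> \<mu>" and gap: "\<mu> * B < (\<Sum>r\<in>R. u r * rhs r)"
  shows False
proof (cases "\<mu> = 0")
  case True
  text \<open>Then u is a ray of the dual feasible region along which the dual objective is unbounded.\<close>
  define s where "s = (\<Sum>r\<in>R. u r * rhs r)"
  define t where "t = (\<bar>B\<bar> + 1) / s"
  have "0 < s" using gap True by (simp add: s_def)
  then have "0 < t" by (simp add: t_def)
  have "(\<Sum>r\<in>R. t * u r * rhs r) \<le> B"
  proof (rule dual)
    show "\<forall>r\<in>R. 0 \<le> t * u r" using u(1) \<open>0 < t\<close> by simp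
    show "\<forall>c\<in>C. (\<Sum>r\<in>R. t * u r * A r c) \<le> cost c"
    proof
      fix c assume "c \<in> C"
      have "(\<Sum>r\<in>R. t * u r * A r c) = t * (\<Sum>r\<in>R. u r * A r c)"
        by (simp add: sum_distrib_left mult.assoc)
      also have "\<dots> \<le> 0"
        using u(2) \<open>c \<in> C\<close> True \<open>0 < t\<close> by (simp add: mult_nonneg_nonpos)
      finally show "(\<Sum>r\<in>R. t * u r * A r c) \<le> cost c"
        using cost \<open>c \<in> C\<close> by fastforce
    qed
  qed
  moreover have "(\<Sum>r\<in>R. t * u r * rhs r) = t * s"
    by (simp add: s_def sum_distrib_left mult.assoc)
  moreover have "t * s = \<bar>B\<bar> + 1"
    using \<open>0 < s\<close> by (simp add: t_def)
  ultimately show False by linarith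
next
  case False
  with \<mu> have "0 < \<mu>" by simp
  have "(\<Sum>r\<in>R. u r / \<mu> * rhs r) \<le> B"
  proof (rule dual)
    show "\<forall>r\<in>R. 0 \<le> u r / \<mu>" using u(1) \<open>0 < \<mu>\<close> by simp
    show "\<forall>c\<in>C. (\<Sum>r\<in>R. u r / \<mu> * A r c) \<le> cost c"
      using u(2) \<open>0 < \<mu>\<close>
      by (simp add: sum_divide_distrib[symmetric] divide_le_eq mult.commute)
  qed
  then have "(\<Sum>r\<in>R. u r * rhs r) \<le> \<mu> * B"
    using \<open>0 < \<mu>\<close> by (simp add: sum_divide_distrib[symmetric] divide_le_eq mult.commute)
  with gap show False by linarith
qed

lemma sum_insert_None_Some:
  "finite R \<Longrightarrow> (\<Sum>i\<in>insert None (Some ` R). f i) = f None + (\<Sum>r\<in>R. f (Some r))"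
  by (simp add: sum.reindex)

lemma sum_Inl_Un_Inr:
  "finite C \<Longrightarrow> finite I \<Longrightarrow>
     (\<Sum>j\<in>Inl ` C \<union> Inr ` I. f j) = (\<Sum>c\<in>C. f (Inl c)) + (\<Sum>i\<in>I. f (Inr i))"
  by (subst sum.union_disjoint) (auto simp: sum.reindex)

text \<open>The LP with objective bound B as a cone membership problem over the rows
  insert None (Some ` R): row None is the objective, and the generators Inr i are slack columns.\<close>

definition lp_columns :: "('c \<Rightarrow> real) \<Rightarrow> ('r \<Rightarrow> 'c \<Rightarrow> real) \<Rightarrow> 'c + 'r option \<Rightarrow> 'r option \<Rightarrow> real" where
  "lp_columns cost A = case_sum (\<lambda>c i. case i of None \<Rightarrow> cost c | Some r \<Rightarrow> A r c)
                          (\<lambda>i' i. if i = i' then (if i' = None then 1 else -1) else 0)"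

definition lp_target :: "real \<Rightarrow> ('r \<Rightarrow> real) \<Rightarrow> 'r option \<Rightarrow> real" where
  "lp_target B rhs i = (case i of None \<Rightarrow> B | Some r \<Rightarrow> rhs r)"

lemma lp_columns_cone_imp_primal:
  fixes A :: "'r \<Rightarrow> 'c \<Rightarrow> real"
  assumes "finite R" "finite C" and I: "I = insert None (Some ` R)"
    and c: "\<forall>j\<in>Inl ` C \<union> Inr ` I. 0 \<le> c j"
      "\<forall>i\<in>I. lp_target B rhs i = (\<Sum>j\<in>Inl ` C \<union> Inr ` I. c j * lp_columns cost A j i)"
  shows "\<forall>r\<in>R. rhs r \<le> (\<Sum>c'\<in>C. A r c' * c (Inl c'))"
    and "(\<Sum>c'\<in>C. cost c' * c (Inl c')) \<le> B"
proof -
  have finI: "finite I" using assms(1) I by simp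
  have row: "lp_target B rhs i = (\<Sum>c'\<in>C. c (Inl c') * lp_columns cost A (Inl c') i)
                   + (if i = None then c (Inr i) else - c (Inr i))" if "i \<in> I" for i
  proof -
    have "lp_target B rhs i = (\<Sum>c'\<in>C. c (Inl c') * lp_columns cost A (Inl c') i)
        + (\<Sum>i'\<in>I. c (Inr i') * lp_columns cost A (Inr i') i)"
      using c(2) that by (simp add: sum_Inl_Un_Inr[OF assms(2) finI])
    moreover have "(\<Sum>i'\<in>I. c (Inr i') * lp_columns cost A (Inr i') i)
        = (\<Sum>i'\<in>I. if i' = i then c (Inr i) * (if i = None then 1 else -1) else 0)"
      by (intro sum.cong) (auto simp: lp_columns_def)
    ultimately show ?thesis
      using that finI by simp
  qed
  show "\<forall>r\<in>R. rhs r \<le> (\<Sum>c'\<in>C. A r c' * c (Inl c'))"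
  proof
    fix r assume "r \<in> R"
    then have "rhs r = (\<Sum>c'\<in>C. A r c' * c (Inl c')) - c (Inr (Some r))"
      using row[of "Some r"] by (simp add: I lp_target_def lp_columns_def mult.commute)
    moreover have "0 \<le> c (Inr (Some r))" using c(1) \<open>r \<in> R\<close> by (simp add: I)
    ultimately show "rhs r \<le> (\<Sum>c'\<in>C. A r c' * c (Inl c'))" by linarith
  qed
  have "B = (\<Sum>c'\<in>C. cost c' * c (Inl c')) + c (Inr None)"
    using row[of None] by (simp add: I lp_target_def lp_columns_def mult.commute)
  moreover have "0 \<le> c (Inr None)" using c(1) by (simp add: I)
  ultimately show "(\<Sum>c'\<in>C. cost c' * c (Inl c')) \<le> B" by linarith
qed

lemma lp_columns_separator_imp_dual_certificate:
  fixes A :: "'r \<Rightarrow> 'c \<Rightarrow> real"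
  assumes "finite R" and I: "I = insert None (Some ` R)"
    and y: "\<forall>j\<in>Inl ` C \<union> Inr ` I. 0 \<le> inner_on I y (lp_columns cost A j)"
      "inner_on I y (lp_target B rhs) < 0"
  shows "\<forall>r\<in>R. 0 \<le> - y (Some r)"
    and "\<forall>c\<in>C. (\<Sum>r\<in>R. - y (Some r) * A r c) \<le> y None * cost c"
    and "0 \<le> y None" and "y None * B < (\<Sum>r\<in>R. - y (Some r) * rhs r)"
proof -
  have finI: "finite I" using assms(1) I by simp
  have slack: "inner_on I y (lp_columns cost A (Inr i)) = (if i = None then y i else - y i)"
    if "i \<in> I" for i
  proof -
    have "inner_on I y (lp_columns cost A (Inr i))
        = (\<Sum>i'\<in>I. if i' = i then y i * (if i = None then 1 else -1) else 0)"
      unfolding inner_on_def by (intro sum.cong) (auto simp: lp_columns_def)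
    then show ?thesis using that finI by simp
  qed
  show "\<forall>r\<in>R. 0 \<le> - y (Some r)"
  proof
    fix r assume "r \<in> R"
    then have "Some r \<in> I" "Inr (Some r) \<in> Inl ` C \<union> Inr ` I" by (auto simp: I)
    then have "0 \<le> inner_on I y (lp_columns cost A (Inr (Some r)))" using y(1) by blast
    then show "0 \<le> - y (Some r)" using slack[OF \<open>Some r \<in> I\<close>] by simp
  qed
  have "None \<in> I" "Inr None \<in> Inl ` C \<union> Inr ` I" by (auto simp: I)
  then have "0 \<le> inner_on I y (lp_columns cost A (Inr None))" using y(1) by blast
  then show "0 \<le> y None" using slack[OF \<open>None \<in> I\<close>] by simp
  show "\<forall>c\<in>C. (\<Sum>r\<in>R. - y (Some r) * A r c) \<le> y None * cost c"
  proof
    fix c assume "c \<in> C"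
    then have "0 \<le> inner_on I y (lp_columns cost A (Inl c))" using y(1) by simp
    then show "(\<Sum>r\<in>R. - y (Some r) * A r c) \<le> y None * cost c"
      unfolding inner_on_def I sum_insert_None_Some[OF assms(1)]
      by (simp add: lp_columns_def sum_negf)
  qed
  show "y None * B < (\<Sum>r\<in>R. - y (Some r) * rhs r)"
    using y(2) unfolding inner_on_def I sum_insert_None_Some[OF assms(1)]
    by (simp add: lp_target_def sum_negf)
qed

lemma lp_primal_le_dual_bound:
  fixes A :: "'r \<Rightarrow> 'c \<Rightarrow> real"
  assumes "finite R" "finite C" and cost: "\<forall>c\<in>C. 0 \<le> cost c"
    and dual: "\<And>u. \<forall>r\<in>R. 0 \<le> u r \<Longrightarrow> \<forall>c\<in>C. (\<Sum>r\<in>R. u r * A r c) \<le> cost c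
                  \<Longrightarrow> (\<Sum>r\<in>R. u r * rhs r) \<le> B"
  obtains x where "\<forall>c\<in>C. 0 \<le> x c" "\<forall>r\<in>R. rhs r \<le> (\<Sum>c\<in>C. A r c * x c)"
    "(\<Sum>c\<in>C. cost c * x c) \<le> B"
proof -
  define I where "I = insert None (Some ` R)"
  have "finite I" "finite (Inl ` C \<union> Inr ` I)" using assms(1,2) by (auto simp: I_def)
  from farkas_lemma[OF this, of "lp_target B rhs" "lp_columns cost A"] show ?thesis
  proof
    assume "\<exists>c. (\<forall>j\<in>Inl ` C \<union> Inr ` I. 0 \<le> c j) \<and>
      (\<forall>i\<in>I. lp_target B rhs i = (\<Sum>j\<in>Inl ` C \<union> Inr ` I. c j * lp_columns cost A j i))"
    then obtain c where "\<forall>j\<in>Inl ` C \<union> Inr ` I. 0 \<le> c j"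
      "\<forall>i\<in>I. lp_target B rhs i = (\<Sum>j\<in>Inl ` C \<union> Inr ` I. c j * lp_columns cost A j i)"
      by blast
    with lp_columns_cone_imp_primal[OF assms(1,2) I_def] show ?thesis
      by (intro that[of "c \<circ> Inl"]) auto
  next
    assume "\<exists>y. (\<forall>j\<in>Inl ` C \<union> Inr ` I. 0 \<le> inner_on I y (lp_columns cost A j))
      \<and> inner_on I y (lp_target B rhs) < 0"
    then obtain y where "\<forall>j\<in>Inl ` C \<union> Inr ` I. 0 \<le> inner_on I y (lp_columns cost A j)"
      "inner_on I y (lp_target B rhs) < 0"
      by blast
    note certificate = lp_columns_separator_imp_dual_certificate[OF assms(1) I_def this]
    have False
      by (rule lp_dual_certificate_absurd[OF cost dual certificate])
    then show ?thesis ..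
  qed
qed

lemma sum_diagonal_plus_indicator:
  fixes x :: "'i \<Rightarrow> real"
  assumes "finite K" "i \<in> K" "N \<subseteq> K" "i \<notin> N"
  shows "(\<Sum>j\<in>K. (if j = i then a else if j \<in> N then 1 else 0) * x j) = a * x i + (\<Sum>j\<in>N. x j)"
proof -
  have "(\<Sum>j\<in>K. (if j = i then a else if j \<in> N then 1 else 0) * x j)
      = (\<Sum>j\<in>K. (if j = i then a * x j else 0)) + (\<Sum>j\<in>K. (if j \<in> N then x j else 0))"
    unfolding sum.distrib[symmetric] using assms(4) by (intro sum.cong) auto
  also have "\<dots> = a * x i + (\<Sum>j\<in>N. x j)"
    using assms(1-3) by (simp add: sum.inter_restrict[symmetric] Int_absorb1)
  finally show ?thesis .
qed

definition lp_matrix :: "nat \<Rightarrow> nat set set \<Rightarrow> (nat \<Rightarrow> nat) \<Rightarrow> nat \<Rightarrow> nat \<Rightarrow> real" where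
  "lp_matrix k E lam i j = (if j = i then real (lam i) else if j \<in> nonnbrs k E i then 1 else 0)"

lemma lp_matrix_row_sum:
  "i \<in> {1..k} \<Longrightarrow>
     (\<Sum>j\<in>{1..k}. lp_matrix k E lam i j * x j) = real (lam i) * x i + (\<Sum>j\<in>nonnbrs k E i. x j)"
  unfolding lp_matrix_def by (rule sum_diagonal_plus_indicator) (auto simp: nonnbrs_def)

lemma lp_matrix_column_sum:
  assumes "j \<in> {1..k}"
  shows "(\<Sum>i\<in>{1..k}. u i * lp_matrix k E lam i j) = real (lam j) * u j + (\<Sum>i\<in>nonnbrs k E j. u i)"
proof -
  have "(\<Sum>i\<in>{1..k}. u i * lp_matrix k E lam i j)
      = (\<Sum>i\<in>{1..k}. (if i = j then real (lam j) else if i \<in> nonnbrs k E j then 1 else 0) * u i)"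
    using assms by (intro sum.cong) (auto simp: lp_matrix_def nonnbrs_def insert_commute)
  also have "\<dots> = real (lam j) * u j + (\<Sum>i\<in>nonnbrs k E j. u i)"
    using assms by (intro sum_diagonal_plus_indicator) (auto simp: nonnbrs_def)
  finally show ?thesis .
qed

lemma zeta_le_objective:
  assumes "lp_feasible k E lam x"
  shows "zeta k E lam \<le> (\<Sum>i\<in>{1..k}. real (lam i) * x i)"
proof -
  have "bdd_below {\<Sum>i\<in>{1..k}. real (lam i) * x i | x. lp_feasible k E lam x}"
    by (rule bdd_belowI[of _ 0]) (auto simp: lp_feasible_def intro!: sum_nonneg)
  then show ?thesis
    unfolding zeta_def using assms by (intro cInf_lower) blast+
qed

lemma zeta_le_dual_bound:
  assumes dual: "\<And>u. \<forall>i\<in>{1..k}. 0 \<le> u i \<Longrightarrow>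
      \<forall>j\<in>{1..k}. real (lam j) * u j + (\<Sum>i\<in>nonnbrs k E j. u i) \<le> real (lam j) \<Longrightarrow>
      (\<Sum>i\<in>{1..k}. u i) \<le> B"
  shows "zeta k E lam \<le> B"
proof -
  obtain x where x: "\<forall>j\<in>{1..k}. 0 \<le> x j" "\<forall>i\<in>{1..k}. 1 \<le> (\<Sum>j\<in>{1..k}. lp_matrix k E lam i j * x j)"
    and objective: "(\<Sum>j\<in>{1..k}. real (lam j) * x j) \<le> B"
  proof (rule lp_primal_le_dual_bound[of "{1..k}" "{1..k}" "\<lambda>j. real (lam j)" "lp_matrix k E lam" "\<lambda>_. 1" B])
    fix u assume "\<forall>i\<in>{1..k}. 0 \<le> u i" "\<forall>j\<in>{1..k}. (\<Sum>i\<in>{1..k}. u i * lp_matrix k E lam i j) \<le> real (lam j)"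
    then show "(\<Sum>i\<in>{1..k}. u i * 1) \<le> B"
      using dual lp_matrix_column_sum by simp
  qed auto
  have "lp_feasible k E lam x"
    unfolding lp_feasible_def
  proof
    fix i assume i: "i \<in> {1..k}"
    have "1 \<le> (\<Sum>j\<in>{1..k}. lp_matrix k E lam i j * x j)" using x(2) i by blast
    then show "0 \<le> x i \<and> 1 \<le> real (lam i) * x i + (\<Sum>j\<in>nonnbrs k E i. x j)"
      using x(1) i lp_matrix_row_sum[OF i] by simp
  qed
  with objective show ?thesis
    using zeta_le_objective by fastforce
qed

section \<open>The dual bound\<close>

lemma five_eighths_inequality:
  fixes L r y s :: real
  assumes L: "2 \<le> L" and r: "0 \<le> r" and "0 \<le> y"
    and constraint: "L * y + s \<le> L" and s: "s \<le> r * y"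
  shows "y + s \<le> (5 * L + 1 + r) / 8"
proof -
  have "0 < L + r" using L r by simp
  have key: "8 * L * (1 + r) \<le> (5 * L + 1 + r) * (L + r)"
  proof -
    have "(5 * L + 1 + r) * (L + r) - 8 * L * (1 + r) = (r - L)\<^sup>2 + L * (4 * L - 7) + r"
      by (simp add: power2_eq_square algebra_simps)
    moreover have "0 \<le> L * (4 * L - 7)" using L by simp
    ultimately show ?thesis using r by (smt (verit) zero_le_power2)
  qed
  text \<open>Both upper bounds on y + s are linear in y; they cross at y = L / (L + r).\<close>
  show ?thesis
  proof (cases "y * (L + r) \<le> L")
    case True
    have "8 * ((1 + r) * y) * (L + r) = 8 * (1 + r) * (y * (L + r))" by (simp add: algebra_simps)
    also have "\<dots> \<le> 8 * (1 + r) * L" using True r by (intro mult_left_mono) auto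
    also have "\<dots> \<le> (5 * L + 1 + r) * (L + r)" using key by (simp add: algebra_simps)
    finally have "8 * ((1 + r) * y) \<le> 5 * L + 1 + r" using \<open>0 < L + r\<close> by simp
    moreover have "y + s \<le> (1 + r) * y" using s by (simp add: algebra_simps)
    ultimately show ?thesis by simp
  next
    case False
    have "8 * (L - (L - 1) * y) * (L + r) = 8 * L * (L + r) - 8 * (L - 1) * (y * (L + r))"
      by (simp add: algebra_simps)
    also have "\<dots> \<le> 8 * L * (L + r) - 8 * (L - 1) * L"
      using False L by (intro diff_left_mono mult_left_mono) auto
    also have "\<dots> = 8 * L * (1 + r)" by (simp add: algebra_simps)
    also have "\<dots> \<le> (5 * L + 1 + r) * (L + r)" using key .
    finally have "8 * (L - (L - 1) * y) \<le> 5 * L + 1 + r" using \<open>0 < L + r\<close> by simp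
    moreover have "y + s \<le> L - (L - 1) * y" using constraint by (simp add: algebra_simps)
    ultimately show ?thesis by simp
  qed
qed

definition is_clique :: "'v set set \<Rightarrow> 'v set \<Rightarrow> bool" where
  "is_clique E C \<longleftrightarrow> (\<forall>i\<in>C. \<forall>j\<in>C. i \<noteq> j \<longrightarrow> {i, j} \<in> E)"

lemma dual_constraints_mono:
  fixes y :: "'v \<Rightarrow> real"
  assumes "finite S" "T \<subseteq> S" "\<forall>i\<in>S. 0 \<le> y i"
    and "\<forall>i\<in>S. real (lam i) * y i + (\<Sum>j\<in>{j\<in>S. j \<noteq> i \<and> {i, j} \<notin> E}. y j) \<le> real (lam i)"
  shows "\<forall>i\<in>T. real (lam i) * y i + (\<Sum>j\<in>{j\<in>T. j \<noteq> i \<and> {i, j} \<notin> E}. y j) \<le> real (lam i)"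
proof
  fix i assume "i \<in> T"
  have "(\<Sum>j\<in>{j\<in>T. j \<noteq> i \<and> {i, j} \<notin> E}. y j) \<le> (\<Sum>j\<in>{j\<in>S. j \<noteq> i \<and> {i, j} \<notin> E}. y j)"
    using assms(1-3) by (intro sum_mono2) auto
  then show "real (lam i) * y i + (\<Sum>j\<in>{j\<in>T. j \<noteq> i \<and> {i, j} \<notin> E}. y j) \<le> real (lam i)"
    using assms(2,4) \<open>i \<in> T\<close> by fastforce
qed

lemma clique_budget_neighbourhood:
  fixes lam :: "'v \<Rightarrow> nat"
  assumes "finite S" "v \<in> S" and T: "T = {j\<in>S. j \<noteq> v \<and> {v, j} \<in> E}"
    and clique: "\<forall>C\<subseteq>S. C \<noteq> {} \<longrightarrow> is_clique E C \<longrightarrow> (\<Sum>i\<in>C. real (lam i) + 1) \<le> D + 1"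
  shows "\<forall>C\<subseteq>T. C \<noteq> {} \<longrightarrow> is_clique E C \<longrightarrow> (\<Sum>i\<in>C. real (lam i) + 1) \<le> D - real (lam v) - 1 + 1"
proof (intro allI impI)
  fix C assume C: "C \<subseteq> T" "C \<noteq> {}" "is_clique E C"
  have "C \<subseteq> S" using C(1) by (auto simp: T)
  then have "finite C" using assms(1) by (rule finite_subset)
  moreover have "is_clique E (insert v C)" "insert v C \<subseteq> S" "v \<notin> C"
    using C assms(2) by (auto simp: is_clique_def T insert_commute)
  ultimately show "(\<Sum>i\<in>C. real (lam i) + 1) \<le> D - real (lam v) - 1 + 1"
    using clique[rule_format, of "insert v C"] by simp
qed

lemma dual_weight_bound:
  fixes E :: "'v set set" and lam :: "'v \<Rightarrow> nat" and y :: "'v \<Rightarrow> real"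
  assumes "finite S" "S \<noteq> {}" "\<forall>i\<in>S. 2 \<le> lam i" "\<forall>i\<in>S. 0 \<le> y i"
    and "\<forall>i\<in>S. real (lam i) * y i + (\<Sum>j\<in>{j\<in>S. j \<noteq> i \<and> {i, j} \<notin> E}. y j) \<le> real (lam i)"
    and "\<forall>C\<subseteq>S. C \<noteq> {} \<longrightarrow> is_clique E C \<longrightarrow> (\<Sum>i\<in>C. real (lam i) + 1) \<le> D + 1"
  shows "(\<Sum>i\<in>S. y i) \<le> (5 * D + card S) / 8"
  using assms
proof (induction S arbitrary: D rule: finite_psubset_induct)
  case (psubset S)
  note lam = psubset.prems(2) and y = psubset.prems(3)
    and constraint = psubset.prems(4) and clique = psubset.prems(5)
  text \<open>Peel off a vertex v of maximal weight together with its non-neighbours R;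
    the remaining vertices T are neighbours of v, so every clique of T extends by v.\<close>
  obtain v where v: "v \<in> S" "\<forall>j\<in>S. y j \<le> y v"
    using Max_in[of "y ` S"] Max_ge[of "y ` S"] psubset.hyps(1) psubset.prems(1) by fastforce
  define R where "R = {j\<in>S. j \<noteq> v \<and> {v, j} \<notin> E}"
  define T where "T = {j\<in>S. j \<noteq> v \<and> {v, j} \<in> E}"
  have S: "S = insert v (R \<union> T)" and S_parts: "v \<notin> R \<union> T" "R \<inter> T = {}" "finite R" "finite T"
    using v(1) psubset.hyps(1) by (auto simp: R_def T_def)
  have sum_S: "(\<Sum>i\<in>S. y i) = y v + (\<Sum>i\<in>R. y i) + (\<Sum>i\<in>T. y i)"
    and card_S: "real (card S) = 1 + real (card R) + real (card T)"
    unfolding S using S_parts by (simp_all add: sum.union_disjoint card_Un_disjoint)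
  have "(\<Sum>i\<in>R. y i) \<le> real (card R) * y v"
    using sum_mono[of R y "\<lambda>_. y v"] v(2) by (simp add: R_def)
  moreover have "real (lam v) * y v + (\<Sum>i\<in>R. y i) \<le> real (lam v)"
    using constraint v(1) by (simp add: R_def)
  ultimately have star: "y v + (\<Sum>i\<in>R. y i) \<le> (5 * real (lam v) + 1 + real (card R)) / 8"
    using five_eighths_inequality lam y v(1) by simp
  have "real (lam v) + 1 \<le> D + 1"
    using clique[rule_format, of "{v}"] v(1) by (simp add: is_clique_def)
  show ?case
  proof (cases "T = {}")
    case True
    then have "(\<Sum>i\<in>T. y i) = 0" "real (card T) = 0" by simp_all
    then show ?thesis using sum_S card_S star \<open>real (lam v) + 1 \<le> D + 1\<close> by (simp add: field_simps)
  next
    case False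
    have "(\<Sum>i\<in>T. y i) \<le> (5 * (D - real (lam v) - 1) + card T) / 8"
    proof (rule psubset.IH)
      show "T \<subset> S" using S S_parts by blast
      show "T \<noteq> {}" using False .
      show "\<forall>i\<in>T. 2 \<le> lam i" "\<forall>i\<in>T. 0 \<le> y i" using lam y by (auto simp: T_def)
      show "\<forall>i\<in>T. real (lam i) * y i + (\<Sum>j\<in>{j\<in>T. j \<noteq> i \<and> {i, j} \<notin> E}. y j) \<le> real (lam i)"
        using dual_constraints_mono[OF psubset.hyps(1) _ y constraint] S by blast
      show "\<forall>C\<subseteq>T. C \<noteq> {} \<longrightarrow> is_clique E C \<longrightarrow> (\<Sum>i\<in>C. real (lam i) + 1) \<le> D - real (lam v) - 1 + 1"
        by (rule clique_budget_neighbourhood[OF psubset.hyps(1) v(1) T_def clique])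
    qed
    then show ?thesis using sum_S card_S star by (simp add: field_simps)
  qed
qed

section \<open>Cliques of a realisation\<close>

lemma profile_entry_le_DIM: "profile_entry (P :: 'a::euclidean_space set) \<le> DIM('a)"
proof -
  have "l < DIM('a)" if "is_sphere l (S :: 'a set)" for l S
  proof -
    from that obtain A :: "'a set" where "aff_dim A = int l + 1"
      unfolding is_sphere_def by blast
    then show ?thesis using aff_dim_le_DIM[of A] by simp
  qed
  then have "(LEAST l. \<exists>S. is_sphere l S \<and> P \<subseteq> (S :: 'a set)) \<le> DIM('a)"
    if "is_sphere l S" "P \<subseteq> S" for l S
    using that Least_le[of "\<lambda>l. \<exists>S. is_sphere l S \<and> P \<subseteq> S" l] by fastforce
  then show ?thesis by (auto simp: profile_entry_def)
qed

lemma equidistant_subset_sphere: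
  fixes P :: "'a::euclidean_space set"
  assumes equi: "\<forall>p\<in>P. dist p q = \<rho>" and ab: "a \<in> P" "b \<in> P" "a \<noteq> b"
  shows "\<exists>S. is_sphere (nat (aff_dim P) - 1) S \<and> P \<subseteq> S"
proof -
  define Q where "Q = (\<lambda>x. - a + x) ` P"
  obtain u w where u: "u \<in> span Q" and w: "\<And>v. v \<in> span Q \<Longrightarrow> orthogonal w v"
    and uw: "q - a = u + w"
    using orthogonal_subspace_decomp_exists[of Q "q - a"] by blast
  text \<open>c is the foot of the perpendicular from q to the affine hull of P.\<close>
  define c where "c = a + u"
  have hull: "affine hull P = (\<lambda>x. a + x) ` span Q"
    using affine_hull_span_gen[of a P] ab(1) by (simp add: hull_inc Q_def)
  have c: "c \<in> affine hull P" using u by (simp add: hull c_def)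
  define r where "r = sqrt (\<rho>\<^sup>2 - (norm w)\<^sup>2)"
  have dist_c: "dist x c = r" if "x \<in> P" for x
  proof -
    have "- a + x \<in> span Q" using that by (auto simp: Q_def intro: span_base)
    then have "x - c \<in> span Q" using u by (metis c_def diff_add_eq diff_diff_eq span_diff uminus_add_conv_diff)
    then have "orthogonal (x - c) (- w)"
      using w[of "x - c"] by (simp add: orthogonal_def inner_commute)
    from norm_add_Pythagorean[OF this]
    have "(norm (x - c - w))\<^sup>2 = (norm (x - c))\<^sup>2 + (norm w)\<^sup>2" by simp
    moreover have "x - c - w = x - q" using uw by (simp add: c_def algebra_simps)
    ultimately show ?thesis
      using equi that by (simp add: r_def dist_norm)
  qed
  have "r \<noteq> 0"
    using dist_c[OF ab(1)] dist_c[OF ab(2)] ab(3) by auto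
  moreover have "0 \<le> r"
    using dist_c[OF ab(1)] by auto
  ultimately have "0 < r" by simp
  have "1 \<le> aff_dim P"
    using aff_dim_subset[of "{a, b}" P] ab by simp
  then have "is_sphere (nat (aff_dim P) - 1) {x \<in> affine hull P. dist x c = r}"
    unfolding is_sphere_def using c \<open>0 < r\<close> by (intro exI[of _ "affine hull P"]) auto
  moreover have "P \<subseteq> {x \<in> affine hull P. dist x c = r}"
    using dist_c by (auto intro: hull_inc)
  ultimately show ?thesis by blast
qed

lemma profile_entry_less_aff_dim:
  fixes P :: "'a::euclidean_space set"
  assumes "3 < card P" and "\<forall>p\<in>P. dist p q = \<rho>"
  shows "int (profile_entry P) < aff_dim P"
proof -
  have "finite P" "\<not> card P \<le> Suc 0"
    using assms(1) card.infinite by fastforce+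
  then obtain a b where ab: "a \<in> P" "b \<in> P" "a \<noteq> b"
    using card_le_Suc0_iff_eq by blast
  obtain S where S: "is_sphere (nat (aff_dim P) - 1) S" "P \<subseteq> S"
    using equidistant_subset_sphere[OF assms(2) ab] by blast
  have "profile_entry P = (LEAST l. \<exists>S. is_sphere l S \<and> P \<subseteq> (S :: 'a set))"
    using assms(1) S by (auto simp: profile_entry_def)
  also have "\<dots> \<le> nat (aff_dim P) - 1"
    using S by (intro Least_le) blast
  finally show ?thesis
    using aff_dim_subset[of "{a, b}" P] ab by simp
qed

lemma inner_diff_eq_0_if_cross_dists_eq:
  fixes p q p' q' :: "'a::real_inner"
  assumes "dist p p' = \<delta>" "dist p q' = \<delta>" "dist q p' = \<delta>" "dist q q' = \<delta>"
  shows "(p - q) \<bullet> (p' - q') = 0"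
proof -
  have "2 * ((p - q) \<bullet> (p' - q'))
      = (dist p q')\<^sup>2 + (dist q p')\<^sup>2 - (dist p p')\<^sup>2 - (dist q q')\<^sup>2"
    by (simp add: dist_norm power2_norm_eq_inner inner_diff_left inner_diff_right
        inner_commute algebra_simps)
  then show ?thesis using assms by simp
qed

lemma dim_UN_pairwise_orthogonal:
  fixes Q :: "'i \<Rightarrow> 'a::euclidean_space set"
  assumes "finite C"
    and "\<And>i j u v. i \<in> C \<Longrightarrow> j \<in> C \<Longrightarrow> i \<noteq> j \<Longrightarrow> u \<in> Q i \<Longrightarrow> v \<in> Q j \<Longrightarrow> u \<bullet> v = 0"
  shows "dim (\<Union>i\<in>C. Q i) = (\<Sum>i\<in>C. dim (Q i))"
  using assms
proof (induction C rule: finite_induct)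
  case (insert a C)
  have "dim (Q a \<union> (\<Union>i\<in>C. Q i)) = dim (Q a) + dim (\<Union>i\<in>C. Q i)"
    using insert.prems insert.hyps(2) by (intro dim_orthogonal_sum) blast
  moreover have "dim (\<Union>i\<in>C. Q i) = (\<Sum>i\<in>C. dim (Q i))"
    using insert.prems by (intro insert.IH) blast
  ultimately show ?case using insert.hyps by simp
qed simp

lemma unit_distance_family_profile_sum_le_DIM:
  fixes P :: "'i \<Rightarrow> 'a::euclidean_space set"
  assumes "finite C" "2 \<le> card C" and big: "\<forall>i\<in>C. 3 < card (P i)"
    and unit: "\<And>i j p p'. i \<in> C \<Longrightarrow> j \<in> C \<Longrightarrow> i \<noteq> j \<Longrightarrow> p \<in> P i \<Longrightarrow> p' \<in> P j \<Longrightarrow> dist p p' = 1"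
  shows "(\<Sum>i\<in>C. profile_entry (P i) + 1) \<le> DIM('a)"
proof -
  define a where "a i = (SOME p. p \<in> P i)" for i
  have a: "a i \<in> P i" if "i \<in> C" for i
  proof -
    have "P i \<noteq> {}" using big that by fastforce
    then show ?thesis by (simp add: a_def some_in_eq)
  qed
  define Q where "Q i = (\<lambda>x. x - a i) ` P i" for i
  have "profile_entry (P i) + 1 \<le> dim (Q i)" if "i \<in> C" for i
  proof -
    have "\<not> C \<subseteq> {i}"
      using assms(2) card_mono[of "{i}" C] by auto
    then obtain j where "j \<in> C" "j \<noteq> i" by blast
    then have "\<forall>p\<in>P i. dist p (a j) = 1"
      using unit a that by metis
    then have "int (profile_entry (P i)) < aff_dim (P i)"
      using big that by (intro profile_entry_less_aff_dim) auto
    moreover have "aff_dim (P i) = int (dim (Q i))"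
      unfolding Q_def using a[OF that] by (intro aff_dim_eq_dim_subtract hull_inc)
    ultimately show ?thesis by linarith
  qed
  then have "(\<Sum>i\<in>C. profile_entry (P i) + 1) \<le> (\<Sum>i\<in>C. dim (Q i))"
    by (intro sum_mono)
  also have "\<dots> = dim (\<Union>i\<in>C. Q i)"
  proof (rule dim_UN_pairwise_orthogonal[symmetric])
    fix i j u v assume ij: "i \<in> C" "j \<in> C" "i \<noteq> j" and "u \<in> Q i" "v \<in> Q j"
    then obtain p p' where "p \<in> P i" "p' \<in> P j" "u = p - a i" "v = p' - a j"
      by (auto simp: Q_def)
    then show "u \<bullet> v = 0"
      using inner_diff_eq_0_if_cross_dists_eq[where p = p and q = "a i" and p' = p' and q' = "a j"]
        unit[OF ij] a[OF ij(1)] a[OF ij(2)] by simp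
  qed fact
  also have "\<dots> \<le> DIM('a)"
    by (rule dim_subset_UNIV)
  finally show ?thesis .
qed

lemma card_gt_3_if_profile_entry_pos: "0 < profile_entry P \<Longrightarrow> 3 < card P"
  by (rule ccontr) (simp add: profile_entry_def)

lemma compatible_clique_profile_weight:
  fixes P :: "nat \<Rightarrow> 'a::euclidean_space set"
  assumes "compatible k E P" "C \<subseteq> {1..k}" "C \<noteq> {}" "is_clique E C"
    and "\<forall>i\<in>C. 3 < card (P i)"
  shows "(\<Sum>i\<in>C. real (profile_entry (P i)) + 1) \<le> real DIM('a) + 1"
proof (cases "card C = 1")
  case True
  then obtain i where "C = {i}" by (auto simp: card_1_singleton_iff)
  then show ?thesis using profile_entry_le_DIM[of "P i"] by simp
next
  case False
  have "finite C" using assms(2) finite_subset by blast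
  then have "0 < card C" using assms(3) by (simp add: card_gt_0_iff)
  with False have "2 \<le> card C" by linarith
  have unit: "dist p p' = 1"
    if "i \<in> C" "j \<in> C" "i \<noteq> j" "p \<in> P i" "p' \<in> P j" for i j p p'
  proof -
    have "{i, j} \<in> E" "i \<in> {1..k}" "j \<in> {1..k}"
      using assms(2,4) that by (auto simp: is_clique_def)
    then show ?thesis using assms(1) that by (simp add: compatible_def)
  qed
  have "(\<Sum>i\<in>C. profile_entry (P i) + 1) \<le> DIM('a)"
    by (rule unit_distance_family_profile_sum_le_DIM[OF \<open>finite C\<close> \<open>2 \<le> card C\<close> assms(5) unit])
  moreover have "(\<Sum>i\<in>C. real (profile_entry (P i)) + 1) = real (\<Sum>i\<in>C. profile_entry (P i) + 1)"
    by (simp add: ac_simps)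
  ultimately show ?thesis by linarith
qed

theorem theorem5p5:
  fixes k :: nat and E :: "nat set set" and lam :: "nat \<Rightarrow> nat"
  assumes "is_graph_on k E"
    and "realisable TYPE('a::euclidean_space) k E lam"
    and "\<forall>i\<in>{1..k}. lam i \<ge> 2"
  shows "zeta k E lam \<le> 5/8 * real DIM('a) + 1/8 * real k"
proof (rule zeta_le_dual_bound)
  obtain P :: "nat \<Rightarrow> 'a set" where P: "\<forall>i\<in>{1..k}. finite (P i) \<and> profile_entry (P i) = lam i"
    and compatible: "compatible k E P"
    using assms(2) unfolding realisable_def by blast
  have card_P: "\<forall>i\<in>{1..k}. 3 < card (P i)"
  proof
    fix i assume "i \<in> {1..k}"
    then have "0 < profile_entry (P i)" using P assms(3) by fastforce
    then show "3 < card (P i)" by (rule card_gt_3_if_profile_entry_pos)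
  qed
  have cliques: "\<forall>C\<subseteq>{1..k}. C \<noteq> {} \<longrightarrow> is_clique E C \<longrightarrow>
      (\<Sum>i\<in>C. real (lam i) + 1) \<le> real DIM('a) + 1"
  proof (intro allI impI)
    fix C assume C: "C \<subseteq> {1..k}" "C \<noteq> {}" "is_clique E C"
    have "(\<Sum>i\<in>C. real (lam i) + 1) = (\<Sum>i\<in>C. real (profile_entry (P i)) + 1)"
      using C(1) P by (intro sum.cong) auto
    also have "\<dots> \<le> real DIM('a) + 1"
      using compatible_clique_profile_weight[OF compatible C] card_P C(1) by blast
    finally show "(\<Sum>i\<in>C. real (lam i) + 1) \<le> real DIM('a) + 1" .
  qed
  fix u assume "\<forall>i\<in>{1..k}. 0 \<le> u i"
    "\<forall>j\<in>{1..k}. real (lam j) * u j + (\<Sum>i\<in>nonnbrs k E j. u i) \<le> real (lam j)"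
  then show "(\<Sum>i\<in>{1..k}. u i) \<le> 5/8 * real DIM('a) + 1/8 * real k"
    using dual_weight_bound[of "{1..k}" lam u E "real DIM('a)"] assms(3) cliques
    unfolding nonnbrs_def by (cases "k = 0") auto
qed

end
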